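(* Let $p$ be a prime with $p\equiv 1\pmod 6$. Then there exists a Latin square $L$ of order $p$ that is orthogonal to $B_p$ and contains an intercalate.
   Context: $B_p$ is the Latin square of order $p$ with symbol $i+j\pmod p$ in cell $(i,j)$, $i,j\in\mathbb{Z}_p$. Two Latin squares of order $p$ are orthogonal if superimposing them yields each of the $p^2$ ordered pairs of symbols exactly once. An intercalate in a Latin square $L$ is a $2\times 2$ subsquare: rows $r_1\neq r_2$ and columns $c_1\neq c_2$ such that $L(r_1,c_1)=L(r_2,c_2)$ and $L(r_1,c_2)=L(r_2,c_1)$. *)

theory Defs
  imports "HOL-Computational_Algebra.Primes"
begin

definition latin_square :: "nat \<Rightarrow> (nat \<Rightarrow> nat \<Rightarrow> nat) \<Rightarrow> bool" where
  "latin_square n L \<longleftrightarrow>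
     (\<forall>i<n. bij_betw (\<lambda>j. L i j) {0..<n} {0..<n}) \<and>
     (\<forall>j<n. bij_betw (\<lambda>i. L i j) {0..<n} {0..<n})"

definition B :: "nat \<Rightarrow> nat \<Rightarrow> nat \<Rightarrow> nat" where
  "B p i j = (i + j) mod p"

definition orthogonal :: "nat \<Rightarrow> (nat \<Rightarrow> nat \<Rightarrow> nat) \<Rightarrow> (nat \<Rightarrow> nat \<Rightarrow> nat) \<Rightarrow> bool" where
  "orthogonal n L M \<longleftrightarrow>
     bij_betw (\<lambda>(i, j). (L i j, M i j)) ({0..<n} \<times> {0..<n}) ({0..<n} \<times> {0..<n})"

definition has_intercalate :: "nat \<Rightarrow> (nat \<Rightarrow> nat \<Rightarrow> nat) \<Rightarrow> bool" where
  "has_intercalate n L \<longleftrightarrow>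
     (\<exists>r1<n. \<exists>r2<n. \<exists>c1<n. \<exists>c2<n. r1 \<noteq> r2 \<and> c1 \<noteq> c2 \<and>
        L r1 c1 = L r2 c2 \<and> L r1 c2 = L r2 c1)"

end

theory Submission
  imports Defs "HOL-Number_Theory.Number_Theory"
begin

(* If \<theta> is a map on Z_p such that \<theta>, \<theta> - id and 2\<theta> - id are permutations, then
   L(i, j) = i + \<theta>(j - i) is a Latin square orthogonal to B_p: rows, columns and the
   superposition with B_p are governed by these three maps respectively.
   For a primitive cube root of unity w mod p take \<theta>(x) = -w^2 x on the sixth roots of unity
   and -w x elsewhere.  Each of \<theta>, \<theta> - id, 2\<theta> - id multiplies the sixth roots by one unit
   and the other residues by another unit with the same sixth power, so each permutes Z_p.
   Rows 0, w - w^2 and columns 1, w of L form an intercalate as soon as 1 - w + w^2 = -2w is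
   not a sixth root of unity, i.e. p does not divide 2^6 - 1 = 3^2 * 7.  For p = 7 every
   nonzero residue is a sixth root, \<theta> is linear and L has no intercalate, so an explicit
   square of order 7 is checked by evaluation instead. *)

lemma bij_betw_endo_iff:
  assumes "finite A"
  shows "bij_betw f A A \<longleftrightarrow> inj_on f A \<and> f ` A \<subseteq> A"
  using endo_inj_surj[OF assms] by (auto simp: bij_betw_def)

lemma cong_int_less_iff:
  fixes i j n :: nat
  assumes "i < n" "j < n"
  shows "[int i = int j] (mod int n) \<longleftrightarrow> i = j"
  using assms cong_less_modulus_unique_nat by (auto simp: cong_int_iff)

definition permutes_mod :: "nat \<Rightarrow> (int \<Rightarrow> int) \<Rightarrow> bool" where
  "permutes_mod n f \<longleftrightarrow>
     (\<forall>x y. [f x = f y] (mod int n) \<longleftrightarrow> [x = y] (mod int n))"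

definition orthomorphism_square :: "nat \<Rightarrow> (int \<Rightarrow> int) \<Rightarrow> nat \<Rightarrow> nat \<Rightarrow> nat" where
  "orthomorphism_square n g i j = nat ((int i + g (int j - int i)) mod int n)"

lemma orthomorphism_square_less:
  "n > 0 \<Longrightarrow> orthomorphism_square n g i j < n"
  by (simp add: orthomorphism_square_def nat_less_iff)

lemma orthomorphism_square_eq_iff:
  "n > 0 \<Longrightarrow> orthomorphism_square n g i j = orthomorphism_square n g i' j' \<longleftrightarrow>
     [int i + g (int j - int i) = int i' + g (int j' - int i')] (mod int n)"
  by (simp add: orthomorphism_square_def cong_def eq_nat_nat_iff)

lemma latin_square_orthomorphism_square:
  assumes "n > 0" and g: "permutes_mod n g" and g_minus_id: "permutes_mod n (\<lambda>x. g x - x)"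
  shows "latin_square n (orthomorphism_square n g)"
  unfolding latin_square_def
proof (intro allI impI conjI)
  fix i
  have "j = j'" if "j < n" "j' < n"
    and "orthomorphism_square n g i j = orthomorphism_square n g i j'" for j j'
  proof -
    from that have "[g (int j - int i) = g (int j' - int i)] (mod int n)"
      by (simp add: orthomorphism_square_eq_iff \<open>n > 0\<close> cong_add_lcancel)
    then have "[int j - int i = int j' - int i] (mod int n)"
      using g by (simp add: permutes_mod_def)
    then have "[int j = int j'] (mod int n)"
      by (simp add: cong_iff_dvd_diff)
    then show ?thesis
      using that by (simp add: cong_int_less_iff)
  qed
  then show "bij_betw (orthomorphism_square n g i) {0..<n} {0..<n}"
    using orthomorphism_square_less[OF \<open>n > 0\<close>]
    by (auto simp: bij_betw_endo_iff inj_on_def)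
next
  fix j
  have "i = i'" if "i < n" "i' < n"
    and "orthomorphism_square n g i j = orthomorphism_square n g i' j" for i i'
  proof -
    have shift: "int k + g (int j - int k) = int j + (g (int j - int k) - (int j - int k))" for k
      by simp
    from that have "[g (int j - int i) - (int j - int i) = g (int j - int i') - (int j - int i')] (mod int n)"
      by (simp only: orthomorphism_square_eq_iff[OF \<open>n > 0\<close>] shift cong_add_lcancel)
    then have "[int j - int i = int j - int i'] (mod int n)"
      using g_minus_id by (simp add: permutes_mod_def)
    then have "[int i' = int i] (mod int n)"
      by (simp add: cong_iff_dvd_diff)
    then show ?thesis
      using that by (simp add: cong_int_less_iff)
  qed
  then show "bij_betw (\<lambda>i. orthomorphism_square n g i j) {0..<n} {0..<n}"
    using orthomorphism_square_less[OF \<open>n > 0\<close>]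
    by (auto simp: bij_betw_endo_iff inj_on_def)
qed

lemma orthogonal_orthomorphism_square:
  assumes "n > 0" and g: "permutes_mod n g" and twice_g_minus_id: "permutes_mod n (\<lambda>x. 2 * g x - x)"
  shows "orthogonal n (orthomorphism_square n g) (B n)"
proof -
  let ?pair = "\<lambda>(i, j). (orthomorphism_square n g i j, B n i j)"
  have "inj_on ?pair ({0..<n} \<times> {0..<n})"
  proof (rule inj_onI)
    fix c c' assume "c \<in> {0..<n} \<times> {0..<n}" "c' \<in> {0..<n} \<times> {0..<n}" and "?pair c = ?pair c'"
    then obtain i j i' j' where c: "c = (i, j)" "c' = (i', j')"
      and cells: "i < n" "j < n" "i' < n" "j' < n"
      and L: "orthomorphism_square n g i j = orthomorphism_square n g i' j'"
      and B: "B n i j = B n i' j'"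
      by auto
    define x x' where "x = int j - int i" and "x' = int j' - int i'"
    have L': "[int i + g x = int i' + g x'] (mod int n)"
      using L by (simp add: orthomorphism_square_eq_iff \<open>n > 0\<close> x_def x'_def)
    have "[i + j = i' + j'] (mod n)"
      using B by (simp add: B_def cong_def)
    then have "[int (i + j) = int (i' + j')] (mod int n)"
      by (simp only: cong_int_iff)
    then have B': "[2 * int i + x = 2 * int i' + x'] (mod int n)"
      by (simp add: x_def x'_def)
    have "[2 * (int i + g x) - (2 * int i + x) = 2 * (int i' + g x') - (2 * int i' + x')] (mod int n)"
      using L' B' by (intro cong_diff cong_scalar_left)
    then have "[2 * g x - x = 2 * g x' - x'] (mod int n)"
      by (simp add: algebra_simps)
    then have x: "[x = x'] (mod int n)"
      using twice_g_minus_id by (simp add: permutes_mod_def)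
    then have "[g x = g x'] (mod int n)"
      using g by (simp add: permutes_mod_def)
    then have "[(int i + g x) - g x = (int i' + g x') - g x'] (mod int n)"
      using L' by (intro cong_diff)
    then have i: "[int i = int i'] (mod int n)"
      by simp
    have "[x + int i = x' + int i'] (mod int n)"
      using x i by (intro cong_add)
    then have "[int j = int j'] (mod int n)"
      by (simp add: x_def x'_def)
    with i show "c = c'"
      using c cells by (simp add: cong_int_less_iff)
  qed
  moreover have "?pair ` ({0..<n} \<times> {0..<n}) \<subseteq> {0..<n} \<times> {0..<n}"
    using \<open>n > 0\<close> by (auto simp: orthomorphism_square_less B_def)
  ultimately show ?thesis
    unfolding orthogonal_def by (simp add: bij_betw_endo_iff)
qed

lemma has_intercalate_orthomorphism_squareI:
  fixes r r' c c' :: int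
  assumes "n > 0" and g: "permutes_mod n g"
    and "\<not> [r = r'] (mod int n)" and "\<not> [c = c'] (mod int n)"
    and "[r + g (c - r) = r' + g (c' - r')] (mod int n)"
    and "[r + g (c' - r) = r' + g (c - r')] (mod int n)"
  shows "has_intercalate n (orthomorphism_square n g)"
proof -
  define cell :: "int \<Rightarrow> nat" where "cell a = nat (a mod int n)" for a
  have cell_less: "cell a < n" for a
    using \<open>n > 0\<close> by (simp add: cell_def nat_less_iff)
  have cell_cong: "[int (cell a) = a] (mod int n)" for a
    using \<open>n > 0\<close> by (simp add: cell_def)
  have cell_eq_iff: "cell a = cell b \<longleftrightarrow> [a = b] (mod int n)" for a b
    using \<open>n > 0\<close> by (simp add: cell_def cong_def eq_nat_nat_iff)
  have entry: "orthomorphism_square n g (cell a) (cell b) = orthomorphism_square n g (cell a') (cell b') \<longleftrightarrow>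
      [a + g (b - a) = a' + g (b' - a')] (mod int n)" for a b a' b'
  proof -
    have "[g (int (cell b) - int (cell a)) = g (b - a)] (mod int n)" for a b
      using g cell_cong by (simp add: permutes_mod_def cong_diff)
    then have "[int (cell a) + g (int (cell b) - int (cell a)) = a + g (b - a)] (mod int n)" for a b
      using cell_cong by (intro cong_add)
    then show ?thesis
      using \<open>n > 0\<close> by (simp add: orthomorphism_square_eq_iff cong_def)
  qed
  have "cell r \<noteq> cell r'" "cell c \<noteq> cell c'"
    and "orthomorphism_square n g (cell r) (cell c) = orthomorphism_square n g (cell r') (cell c')"
    and "orthomorphism_square n g (cell r) (cell c') = orthomorphism_square n g (cell r') (cell c)"
    using assms by (simp_all add: cell_eq_iff entry)
  then show ?thesis
    unfolding has_intercalate_def using cell_less by blast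
qed

definition scale_on_roots :: "nat \<Rightarrow> nat \<Rightarrow> int \<Rightarrow> int \<Rightarrow> int \<Rightarrow> int" where
  "scale_on_roots p k c d x = (if [x ^ k = 1] (mod int p) then c * x else d * x)"

lemma scale_on_roots_affine:
  "a * scale_on_roots p k c d x + b * x = scale_on_roots p k (a * c + b) (a * d + b) x"
  by (simp add: scale_on_roots_def algebra_simps)

lemma permutes_mod_scale_on_roots:
  assumes "prime p" and "\<not> int p dvd c" and "\<not> int p dvd d" and "[c ^ k = d ^ k] (mod int p)"
  shows "permutes_mod p (scale_on_roots p k c d)"
proof -
  have unit: "coprime u (int p)" if "\<not> int p dvd u" for u
    using that prime_imp_coprime[of "int p" u] \<open>prime p\<close> by (simp add: coprime_commute)
  have mixed: False if "[x ^ k = 1] (mod int p)" "\<not> [y ^ k = 1] (mod int p)"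
      and "[c * x = d * y] (mod int p)" for x y
  proof -
    have "[c ^ k * x ^ k = d ^ k * y ^ k] (mod int p)"
      using cong_pow[OF \<open>[c * x = d * y] (mod int p)\<close>] by (simp add: power_mult_distrib)
    moreover have "[c ^ k * x ^ k = d ^ k * 1] (mod int p)"
      using \<open>[c ^ k = d ^ k] (mod int p)\<close> \<open>[x ^ k = 1] (mod int p)\<close> by (intro cong_mult)
    ultimately have "[d ^ k * y ^ k = d ^ k * 1] (mod int p)"
      by (meson cong_sym cong_trans)
    moreover have "coprime (d ^ k) (int p)"
      using unit[OF \<open>\<not> int p dvd d\<close>] by simp
    ultimately have "[y ^ k = 1] (mod int p)"
      using cong_mult_lcancel by blast
    with that show False by simp
  qed
  have "[scale_on_roots p k c d x = scale_on_roots p k c d y] (mod int p) \<longleftrightarrow> [x = y] (mod int p)" for x y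
  proof
    assume "[x = y] (mod int p)"
    then have "[x ^ k = 1] (mod int p) \<longleftrightarrow> [y ^ k = 1] (mod int p)"
      by (meson cong_pow cong_sym cong_trans)
    with \<open>[x = y] (mod int p)\<close> show "[scale_on_roots p k c d x = scale_on_roots p k c d y] (mod int p)"
      by (simp add: scale_on_roots_def cong_scalar_left)
  next
    assume eq: "[scale_on_roots p k c d x = scale_on_roots p k c d y] (mod int p)"
    consider "[x ^ k = 1] (mod int p) \<longleftrightarrow> [y ^ k = 1] (mod int p)"
      | "[x ^ k = 1] (mod int p)" "\<not> [y ^ k = 1] (mod int p)"
      | "\<not> [x ^ k = 1] (mod int p)" "[y ^ k = 1] (mod int p)"
      by blast
    then show "[x = y] (mod int p)"
    proof cases
      case 1
      then show ?thesis
        using eq unit assms(2,3) by (auto simp: scale_on_roots_def cong_mult_lcancel split: if_splits)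
    next
      case 2
      then show ?thesis
        using eq mixed[of x y] by (simp add: scale_on_roots_def)
    next
      case 3
      then show ?thesis
        using eq mixed[of y x] by (simp add: scale_on_roots_def cong_sym_eq)
    qed
  qed
  then show ?thesis
    by (simp add: permutes_mod_def)
qed

lemma not_dvd_if_power_cong:
  fixes u v m :: int
  assumes "[u ^ k = v] (mod m)" and "k > 0" and "\<not> m dvd v"
  shows "\<not> m dvd u"
proof
  assume "m dvd u"
  then have "m dvd u ^ k"
    using \<open>k > 0\<close> by (intro dvd_trans[OF _ dvd_power]) simp_all
  then have "[u ^ k = 0] (mod m)"
    by (simp add: cong_0_iff)
  with assms(1) have "[v = 0] (mod m)"
    by (meson cong_sym cong_trans)
  with assms(3) show False
    by (simp add: cong_0_iff)
qed

lemma int_dvd_prime_iff: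
  "prime p \<Longrightarrow> prime q \<Longrightarrow> int p dvd int q \<longleftrightarrow> p = q"
  using primes_dvd_imp_eq by (auto simp: int_dvd_int_iff)

lemma exists_cube_root_of_unity_mod_prime:
  assumes "prime p" and "p mod 3 = 1"
  shows "\<exists>w. [w ^ 2 + w + 1 = 0] (mod int p)"
proof -
  have "p > 1"
    using assms(1) prime_gt_1_nat by blast
  have "3 dvd p - 1"
    using assms(2) by presburger
  then have "card {x \<in> totatives p. ord p x = 3} = totient 3"
    using prime_card_elements_with_ord_eq_totient[OF \<open>p > 1\<close> assms(1), of 3] by simp
  moreover have "totient 3 = 2"
    using totient_prime[of 3] by simp
  ultimately obtain x where x: "ord p x = 3"
    by (metis (mono_tags, lifting) card.empty empty_Collect_eq zero_neq_numeral)
  have "int p dvd (int x - 1) * (int x ^ 2 + int x + 1)"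
  proof -
    have "[x ^ 3 = 1] (mod p)"
      using ord[of x p] x by simp
    then have "int p dvd int x ^ 3 - 1"
      by (metis cong_int_iff cong_iff_dvd_diff of_nat_1 of_nat_power)
    moreover have "int x ^ 3 - 1 = (int x - 1) * (int x ^ 2 + int x + 1)"
      by (simp add: power2_eq_square power3_eq_cube algebra_simps)
    ultimately show ?thesis
      by simp
  qed
  moreover have "\<not> int p dvd int x - 1"
  proof -
    have "\<not> [x = 1] (mod p)"
      using ord_eq_Suc_0_iff[of p x] x by simp
    then show ?thesis
      by (metis cong_int_iff cong_iff_dvd_diff of_nat_1)
  qed
  ultimately have "int p dvd int x ^ 2 + int x + 1"
    using assms(1) by (simp add: prime_dvd_mult_iff)
  then show ?thesis
    by (auto simp: cong_0_iff)
qed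

locale cube_root_mod_prime =
  fixes p :: nat and w :: int
  assumes prime: "prime p" and p_ne_3: "p \<noteq> 3"
    and root: "[w ^ 2 + w + 1 = 0] (mod int p)"
begin

lemma cong_if_multiple_of_root: "a - b = q * (w ^ 2 + w + 1) \<Longrightarrow> [a = b] (mod int p)"
  using root by (simp add: cong_iff_dvd_diff cong_0_iff)

lemma cube_cong_1: "[w ^ 3 = 1] (mod int p)"
  by (rule cong_if_multiple_of_root[where q = "w - 1"])
    (simp add: power2_eq_square power3_eq_cube algebra_simps)

lemma power_sixth_cong_1: "[(w ^ m) ^ 6 = 1] (mod int p)"
proof -
  have "[(w ^ 3) ^ (2 * m) = 1 ^ (2 * m)] (mod int p)"
    using cube_cong_1 by (rule cong_pow)
  then show ?thesis
    by (simp flip: power_mult add: mult.commute mult.left_commute)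
qed

lemma not_dvd_1: "\<not> int p dvd 1"
  using prime by auto

lemma not_dvd_3: "\<not> int p dvd 3"
  using int_dvd_prime_iff[OF prime, of 3] p_ne_3 by simp

lemma not_dvd_if_sixth_root: "[u ^ 6 = 1] (mod int p) \<Longrightarrow> \<not> int p dvd u"
  using not_dvd_if_power_cong[of u 6 1] not_dvd_1 by simp

lemma not_cong_1: "\<not> [w = 1] (mod int p)"
proof
  assume "[w = 1] (mod int p)"
  then have "[w ^ 2 + w + 1 = 1 ^ 2 + 1 + 1] (mod int p)"
    by (intro cong_add cong_pow) auto
  with root have "[3 = 0] (mod int p)"
    by (simp add: cong_sym_eq) (meson cong_sym cong_trans)
  with not_dvd_3 show False
    by (simp add: cong_0_iff)
qed

lemma w_minus_square_not_cong_0: "\<not> [w - w ^ 2 = 0] (mod int p)"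
proof
  assume "[w - w ^ 2 = 0] (mod int p)"
  then have "int p dvd w * (1 - w)"
    by (simp add: cong_0_iff power2_eq_square right_diff_distrib)
  moreover have "\<not> int p dvd w"
    using power_sixth_cong_1[of 1] not_dvd_if_sixth_root by simp
  moreover have "\<not> int p dvd 1 - w"
    using not_cong_1 by (simp add: cong_iff_dvd_diff dvd_diff_commute)
  ultimately show False
    using prime by (simp add: prime_dvd_mult_iff)
qed

lemma not_sixth_root_1_minus_w_plus_square:
  assumes "p \<noteq> 7"
  shows "\<not> [(1 - w + w ^ 2) ^ 6 = 1] (mod int p)"
proof
  assume sixth_root: "[(1 - w + w ^ 2) ^ 6 = 1] (mod int p)"
  have "[1 - w + w ^ 2 = - 2 * w] (mod int p)"
    by (rule cong_if_multiple_of_root[where q = 1]) simp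
  then have "[(1 - w + w ^ 2) ^ 6 = (- 2 * w) ^ 6] (mod int p)"
    by (rule cong_pow)
  also have "(- 2 * w) ^ 6 = 64 * (w ^ 1) ^ 6"
    by (simp add: power_mult_distrib)
  also have "[64 * (w ^ 1) ^ 6 = 64 * 1] (mod int p)"
    using power_sixth_cong_1[of 1] by (rule cong_scalar_left)
  finally have "[1 = 64 * 1] (mod int p)"
    using cong_trans[OF cong_sym[OF sixth_root]] by blast
  then have "int p dvd 3 * (3 * int 7)"
    by (simp add: cong_iff_dvd_diff)
  moreover have "prime (int p)"
    using prime by simp
  ultimately have "int p dvd 3 \<or> int p dvd int 7"
    by (auto simp only: prime_dvd_mult_iff)
  then show False
    using not_dvd_3 int_dvd_prime_iff[OF prime, of 7] \<open>p \<noteq> 7\<close> by simp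
qed

definition orthomorphism :: "int \<Rightarrow> int" where
  "orthomorphism = scale_on_roots p 6 (- (w ^ 2)) (- w)"

lemma permutes_mod_sixth_roots:
  assumes "[c ^ 6 = 1] (mod int p)" and "[d ^ 6 = 1] (mod int p)"
  shows "permutes_mod p (scale_on_roots p 6 c d)"
  using assms prime not_dvd_if_sixth_root
  by (intro permutes_mod_scale_on_roots) (auto intro: cong_trans cong_sym)

lemma permutes_orthomorphism: "permutes_mod p orthomorphism"
  unfolding orthomorphism_def
  using power_sixth_cong_1[of 2] power_sixth_cong_1[of 1]
  by (intro permutes_mod_sixth_roots) simp_all

lemma permutes_orthomorphism_minus_id: "permutes_mod p (\<lambda>x. orthomorphism x - x)"
proof -
  have "[- (w ^ 2) - 1 = w ^ 1] (mod int p)" "[- w - 1 = w ^ 2] (mod int p)"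
    by (rule cong_if_multiple_of_root[where q = "-1"], simp)+
  then have "[(- (w ^ 2) - 1) ^ 6 = 1] (mod int p)" "[(- w - 1) ^ 6 = 1] (mod int p)"
    using power_sixth_cong_1 cong_pow cong_trans by blast+
  then show ?thesis
    using scale_on_roots_affine[of 1 p 6 "- (w ^ 2)" "- w" _ "-1"]
    by (simp add: orthomorphism_def permutes_mod_sixth_roots)
qed

lemma permutes_orthomorphism_twice_minus_id: "permutes_mod p (\<lambda>x. 2 * orthomorphism x - x)"
proof -
  define c d where "c = 2 * - (w ^ 2) + - 1" and "d = 2 * - w + - 1"
  have c_square: "[c ^ 2 = - 3] (mod int p)"
    by (rule cong_if_multiple_of_root[where q = "4 * (w ^ 2 - w + 1)"])
      (simp add: c_def power2_eq_square algebra_simps)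
  have d_square: "[d ^ 2 = - 3] (mod int p)"
    by (rule cong_if_multiple_of_root[where q = 4]) (simp add: d_def power2_eq_square algebra_simps)
  have "\<not> int p dvd - 3"
    using not_dvd_3 by simp
  then have "\<not> int p dvd c" "\<not> int p dvd d"
    using c_square d_square not_dvd_if_power_cong[of _ 2 "- 3"] by auto
  moreover have "[c ^ 6 = d ^ 6] (mod int p)"
  proof -
    have "[c ^ 6 = (- 3) ^ 3] (mod int p)" "[d ^ 6 = (- 3) ^ 3] (mod int p)"
      using cong_pow[OF c_square, of 3] cong_pow[OF d_square, of 3]
      by (simp_all flip: power_mult)
    then show ?thesis
      by (meson cong_sym cong_trans)
  qed
  ultimately have "permutes_mod p (scale_on_roots p 6 c d)"
    using prime by (intro permutes_mod_scale_on_roots)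
  then show ?thesis
    using scale_on_roots_affine[of 2 p 6 "- (w ^ 2)" "- w" _ "-1"]
    by (simp add: orthomorphism_def c_def d_def)
qed

lemma has_intercalate_orthomorphism_square:
  assumes "p \<noteq> 7"
  shows "has_intercalate p (orthomorphism_square p orthomorphism)"
proof (rule has_intercalate_orthomorphism_squareI[where r = 0 and r' = "w - w ^ 2" and c = 1 and c' = w])
  show "p > 0" "permutes_mod p orthomorphism"
    using prime permutes_orthomorphism by (auto simp: prime_gt_0_nat)
  show "\<not> [1 = w] (mod int p)"
    using not_cong_1 by (simp add: cong_sym_eq)
  show "\<not> [0 = w - w ^ 2] (mod int p)"
    using w_minus_square_not_cong_0 by (simp add: cong_sym_eq)
  have orth_1: "orthomorphism 1 = - (w ^ 2)"
    by (simp add: orthomorphism_def scale_on_roots_def)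
  have orth_w: "orthomorphism w = - (w ^ 3)"
    using power_sixth_cong_1[of 1]
    by (simp add: orthomorphism_def scale_on_roots_def power2_eq_square power3_eq_cube)
  have orth_w2: "orthomorphism (w ^ 2) = - (w ^ 4)"
    using power_sixth_cong_1[of 2]
    by (simp add: orthomorphism_def scale_on_roots_def power2_eq_square power4_eq_xxxx)
  have orth_q: "orthomorphism (1 - w + w ^ 2) = - w * (1 - w + w ^ 2)"
    using not_sixth_root_1_minus_w_plus_square[OF assms]
    by (simp add: orthomorphism_def scale_on_roots_def)
  have args: "w - (w - w ^ 2) = w ^ 2" "1 - (w - w ^ 2) = 1 - w + w ^ 2"
    by simp_all
  show "[0 + orthomorphism (1 - 0) = (w - w ^ 2) + orthomorphism (w - (w - w ^ 2))] (mod int p)"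
    unfolding args diff_zero add_0_left orth_1 orth_w2
    by (rule cong_if_multiple_of_root[where q = "w ^ 2 - w"])
      (simp add: power2_eq_square power4_eq_xxxx algebra_simps)
  show "[0 + orthomorphism (w - 0) = (w - w ^ 2) + orthomorphism (1 - (w - w ^ 2))] (mod int p)"
    unfolding args diff_zero add_0_left orth_w orth_q
    by (simp add: power2_eq_square power3_eq_cube algebra_simps)
qed

end

lemma latin_square_iff_distinct:
  "latin_square n L \<longleftrightarrow>
     (\<forall>i\<in>set [0..<n]. distinct (map (L i) [0..<n]) \<and> (\<forall>j\<in>set [0..<n]. L i j < n)) \<and>
     (\<forall>j\<in>set [0..<n]. distinct (map (\<lambda>i. L i j) [0..<n]))"
  unfolding latin_square_def
  by (auto simp: bij_betw_endo_iff distinct_map image_subset_iff)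

lemma orthogonal_iff_distinct:
  "orthogonal n L M \<longleftrightarrow>
     distinct (map (\<lambda>(i, j). (L i j, M i j)) (List.product [0..<n] [0..<n])) \<and>
     (\<forall>i\<in>set [0..<n]. \<forall>j\<in>set [0..<n]. L i j < n \<and> M i j < n)"
proof -
  have cells: "{0..<n} \<times> {0..<n} = set (List.product [0..<n] [0..<n])"
    by simp
  have "distinct (List.product [0..<n] [0..<n])"
    by (simp add: distinct_product)
  then show ?thesis
    unfolding orthogonal_def cells bij_betw_endo_iff[OF finite_set] distinct_map
    by (simp add: image_subset_iff del: set_product) auto
qed

definition square7 :: "nat \<Rightarrow> nat \<Rightarrow> nat" where
  "square7 i j = [[0, 2, 1, 3, 4, 5, 6], [1, 3, 0, 5, 6, 2, 4], [4, 6, 2, 1, 0, 3, 5],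
     [5, 0, 3, 4, 1, 6, 2], [6, 4, 5, 2, 3, 0, 1], [2, 1, 6, 0, 5, 4, 3], [3, 5, 4, 6, 2, 1, 0]] ! i ! j"

lemma latin_square_square7: "latin_square 7 square7"
  unfolding latin_square_iff_distinct by code_simp

lemma orthogonal_square7: "orthogonal 7 square7 (B 7)"
  unfolding orthogonal_iff_distinct B_def by code_simp

lemma has_intercalate_square7: "has_intercalate 7 square7"
  unfolding has_intercalate_def
  by (rule exI[of _ 0], simp, rule exI[of _ 1], simp, rule exI[of _ 0], simp, rule exI[of _ 2])
    (simp add: square7_def)

theorem theorem7p1:
  fixes p :: nat
  assumes "prime p" and "p mod 6 = 1"
  shows "\<exists>L. latin_square p L \<and> orthogonal p L (B p) \<and> has_intercalate p L"
proof -
  have "p mod 3 = 1" "p \<noteq> 3" "p > 0"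
    using assms(2) by presburger+
  obtain w where "[w ^ 2 + w + 1 = 0] (mod int p)"
    using exists_cube_root_of_unity_mod_prime[OF assms(1) \<open>p mod 3 = 1\<close>] by blast
  then interpret cube_root_mod_prime p w
    using assms(1) \<open>p \<noteq> 3\<close> by unfold_locales
  show ?thesis
  proof (cases "p = 7")
    case True
    then show ?thesis
      using latin_square_square7 orthogonal_square7 has_intercalate_square7 by blast
  next
    case False
    have "latin_square p (orthomorphism_square p orthomorphism)"
      using \<open>p > 0\<close> permutes_orthomorphism permutes_orthomorphism_minus_id
      by (rule latin_square_orthomorphism_square)
    moreover have "orthogonal p (orthomorphism_square p orthomorphism) (B p)"
      using \<open>p > 0\<close> permutes_orthomorphism permutes_orthomorphism_twice_minus_id
      by (rule orthogonal_orthomorphism_square)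
    ultimately show ?thesis
      using has_intercalate_orthomorphism_square[OF False] by blast
  qed
qed

end
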